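(* Let $X$ be a first-countable topological space with $X=X_1\sqcup X_2$ (disjoint union), and assume that for every convergent sequence $\bar x=\{x_j\}_{j\in\mathbb{N}}$ contained in $X_1$, the set $L(\bar x)\cap X_2$ has no isolated points, where $L(\bar x)$ is the set of limits of $\bar x$. Then for every subset $S\subseteq X$ that is locally closed (i.e., the intersection of an open and a closed subset of $X$) and Hausdorff in its relative topology, the set $S\cap X_1$ is relatively closed in $S$.
   Context: For a sequence $\bar x=\{x_j\}_{j\in\mathbb{N}}$ in a (not necessarily Hausdorff) topological space, $L(\bar x)$ denotes the set of all points to which the sequence converges. *)

theory Defs
  imports "HOL-Analysis.Analysis"
begin

text \<open>The set L(x) of all points to which a sequence converges
  (the space need not be Hausdorff, so this may contain several points).\<close>
definition seq_limits :: "(nat \<Rightarrow> 'a::topological_space) \<Rightarrow> 'a set" where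
  "seq_limits x = {l. x \<longlonglongrightarrow> l}"

definition locally_closed_set :: "'a::topological_space set \<Rightarrow> bool" where
  "locally_closed_set S \<longleftrightarrow> (\<exists>U C. open U \<and> closed C \<and> S = U \<inter> C)"

definition no_isolated_points :: "'a::topological_space set \<Rightarrow> bool" where
  "no_isolated_points A \<longleftrightarrow> (\<forall>p\<in>A. p islimpt A)"

end

theory Submission
  imports Defs
begin

text \<open>If p \<in> S \<inter> X2 were a limit point of S \<inter> X1, first countability would give a sequence
  in S \<inter> X1 converging to p, and by hypothesis p would not be isolated among its limits. But
  for locally closed S = U \<inter> C, the limits of that sequence lying in the open set U also lie in
  the closed set C, hence in S, and in a Hausdorff S a sequence has at most one limit.\<close>

lemma Hausdorff_subspace_LIMSEQ_unique:
  assumes "Hausdorff_space (top_of_set S)" and "range f \<subseteq> S" and "p \<in> S" and "q \<in> S"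
    and "f \<longlonglongrightarrow> p" and "f \<longlonglongrightarrow> q"
  shows "p = q"
  using limitin_Hausdorff_unique[of "top_of_set S" f p sequentially q] assms
  by (auto simp: limitin_subtopology image_subset_iff)

lemma locally_closed_Hausdorff_LIMSEQ_not_limpt_seq_limits:
  fixes f :: "nat \<Rightarrow> 'a::topological_space"
  assumes "locally_closed_set S" and "Hausdorff_space (top_of_set S)"
    and "range f \<subseteq> S" and "p \<in> S" and "f \<longlonglongrightarrow> p"
  shows "\<not> p islimpt seq_limits f"
proof
  assume "p islimpt seq_limits f"
  obtain U C where "open U" and "closed C" and S: "S = U \<inter> C"
    using assms(1) unfolding locally_closed_set_def by blast
  with \<open>p \<in> S\<close> have "p \<in> U" by blast
  with \<open>p islimpt seq_limits f\<close> \<open>open U\<close>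
  obtain q where q: "f \<longlonglongrightarrow> q" "q \<in> U" "q \<noteq> p"
    unfolding islimpt_def seq_limits_def by blast
  have "q \<in> C"
    using closed_sequentially[OF \<open>closed C\<close> _ q(1)] assms(3) S by blast
  with q S have "q \<in> S" by blast
  with assms(2-5) q(1) have "p = q"
    using Hausdorff_subspace_LIMSEQ_unique by blast
  with q show False by simp
qed

theorem lemma3p1:
  fixes X1 X2 :: "'a::first_countable_topology set"
  assumes "X1 \<union> X2 = UNIV" and "X1 \<inter> X2 = {}"
    and "\<And>x :: nat \<Rightarrow> 'a. range x \<subseteq> X1 \<Longrightarrow> (\<exists>l. x \<longlonglongrightarrow> l)
           \<Longrightarrow> no_isolated_points (seq_limits x \<inter> X2)"
  shows "\<And>S. locally_closed_set S \<Longrightarrow> Hausdorff_space (top_of_set S)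
           \<Longrightarrow> closedin (top_of_set S) (S \<inter> X1)"
proof -
  fix S :: "'a set"
  assume S: "locally_closed_set S" "Hausdorff_space (top_of_set S)"
  show "closedin (top_of_set S) (S \<inter> X1)"
    unfolding closedin_limpt
  proof (intro conjI allI impI)
    show "S \<inter> X1 \<subseteq> S" by blast
    fix p
    assume p: "p islimpt S \<inter> X1 \<and> p \<in> S"
    show "p \<in> S \<inter> X1"
    proof (rule ccontr)
      assume "p \<notin> S \<inter> X1"
      with p assms(1) have "p \<in> X2" by blast
      from p obtain f where f: "\<And>n. f n \<in> S \<inter> X1 - {p}" and "f \<longlonglongrightarrow> p"
        using islimpt_sequential by blast
      then have "no_isolated_points (seq_limits f \<inter> X2)"
        using assms(3) by blast
      moreover have "p \<in> seq_limits f \<inter> X2"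
        using \<open>f \<longlonglongrightarrow> p\<close> \<open>p \<in> X2\<close> unfolding seq_limits_def by simp
      ultimately have "p islimpt seq_limits f"
        unfolding no_isolated_points_def by (blast intro: islimpt_subset)
      moreover have "range f \<subseteq> S" using f by blast
      ultimately show False
        using locally_closed_Hausdorff_LIMSEQ_not_limpt_seq_limits S p \<open>f \<longlonglongrightarrow> p\<close> by blast
    qed
  qed
qed

end
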